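(* Let $R$ be a finite set of $n$ robots, with coordination space $\chi=\mathbb{R}^n$, obstacle region $\chi^{\mathrm{obs}}$, dynamics, brake-safe set $B_G$ and control law $g^G$ as described in the context, where $G$ is any directed graph on vertex set $R$. Then $B_G$ is positively invariant in discrete time for the system under control law $g^G$: $$\forall s\in B_G,\ \forall k\in\mathbb{N},\quad \Phi(k,s,g^G)\in B_G.$$ Moreover, the configuration remains in $\chi^{\mathrm{free}}_G$ in continuous time: $$\forall s\in B_G,\ \forall t\ge 0,\quad \pi_x(\Phi(t,s,g^G))\in \chi^{\mathrm{free}}_G.$$
   Context: Robots $i\in R$ move along fixed paths; $x_i\in\mathbb{R}$ is the curvilinear coordinate of robot $i$, $x=(x_i)_{i\in R}\in\chi:=\mathbb{R}^n$, and $\{\mathbf e_i\}$ is the canonical basis of $\chi$. For each unordered pair $\{i,j\}$, $\chi^{\mathrm{obs}}_{ij}\subset\chi$ (configurations where $i$ and $j$ collide) is an open cylinder of the form $C_{ij}+\mathrm{span}\{\mathbf e_k:k\ne i,j\}$ where $C_{ij}$ is an open bounded convex subset of $\mathrm{span}\{\mathbf e_i,\mathbf e_j\}$ (possibly empty); $\chi^{\mathrm{obs}}=\bigcup_{\{i,j\}}\chi^{\mathrm{obs}}_{ij}$. For $i\neq j$ define $\chi^{\mathrm{obs}}_{i\succ j}:=\chi^{\mathrm{obs}}_{ij}-\mathbb{R}_+\mathbf e_i+\mathbb{R}_+\mathbf e_j$ (Minkowski sum). A priority graph is a directed graph $G$ with vertex set $R$ and edge set $E(G)$; an edge $(i,j)$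 means $i$ has priority over $j$. Set $\chi^{\mathrm{obs}}_G:=\bigcup_{(i,j)\in E(G)}\chi^{\mathrm{obs}}_{i\succ j}$, $\chi^{\mathrm{free}}_{i\succ j}:=\chi\setminus\chi^{\mathrm{obs}}_{i\succ j}$, $\chi^{\mathrm{free}}_G:=\chi\setminus\chi^{\mathrm{obs}}_G$. Dynamics: robot $i$ has state $s_i=(x_i,v_i)\in S_i:=\mathbb{R}\times[0,\overline v_i]$ with speed limit $\overline v_i\ge 0$, and $\dot x_i=v_i$, $\dot v_i=\mathbf u_i(t)\,\delta(\mathbf u_i(t),v_i(t))$, where $\delta(u,v)=0$ if ($v=0$ and $u<0$) or ($v=\overline v_i$ and $u>0$), and $\delta=1$ otherwise. Controls take values in $U_i=[\underline u_i,\overline u_i]$ with $\underline u_i<0<\overline u_i$ and are piecewise constant on each slot $[k,k+1)$, $k\in\mathbb{N}$; $\mathbf U_i$ is the set of such controls, $\mathbf U=\prod_i\mathbf U_i$, $S=\prod_i S_i$, $U=\prod_i U_i$. $\Phi_i(t,s_i,\mathbf u_i)$ is the resulting flow of robot $i$ from $s_i$, and $\Phi(t,s,\mathbf u)=(\Phi_i(t,s_i,\mathbf u_i))_i$. $\underline{\mathbf u}$ denotes the constant control equal to $(\underline u_i)_i$. $\pi_x(s)=x$ and $\pi_{x,i}(s)=x_i$. Brake-safe states: $B_G:=\{s\in S:\ \pi_x(\Phi(t,s,\underline{\mathbf u}))\in\chi^{\mathrm{free}}_G\ \forall t\ge0\}$. Impulse control: $\mathbf u_i^{\mathrm{impulse}}(t)=\overline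 u_i$ for $t\in[0,1)$ and $=\underline u_i$ for $t\ge1$. Worst-case control w.r.t. $i$: $\tilde{\mathbf u}^i$ with $\tilde{\mathbf u}^i_i=\mathbf u_i^{\mathrm{impulse}}$ and $\tilde{\mathbf u}^i_j=\underline{\mathbf u}_j$ (constant $\underline u_j$) for $j\ne i$. Control law $g^G:S\to U$: $g^G_i(s)=\underline u_i$ if there exists $(j,i)\in E(G)$ and $t\ge0$ with $\pi_x(\Phi(t,s,\tilde{\mathbf u}^i))\in\chi^{\mathrm{obs}}_{j\succ i}$; otherwise $g^G_i(s)=\overline u_i$. For a feedback law $h:S\to U$, $\Phi(t,s,h)$ denotes $\Phi(t,s,\mathbf u)$ where $\mathbf u\in\mathbf U$ satisfies $\mathbf u(k)=h(\Phi(k,s,\mathbf u))$ for all $k\in\mathbb{N}$. *)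

theory Defs
  imports "HOL-Analysis.Analysis"
begin

text \<open>Robots are the elements of a finite type 'r (R = UNIV). A configuration is
  x :: 'r => real; a state is s :: 'r => real * real, s i = (x_i, v_i).\<close>

type_synonym 'r config = "'r \<Rightarrow> real"
type_synonym 'r state = "'r \<Rightarrow> real \<times> real"
type_synonym 'r control = "nat \<Rightarrow> 'r \<Rightarrow> real"  \<comment> \<open>value of the control on slot [k,k+1)\<close>

definition unit_vec :: "'r \<Rightarrow> 'r config" where
  "unit_vec i = (\<lambda>k. if k = i then 1 else 0)"

definition obs_pair :: "('r \<Rightarrow> 'r \<Rightarrow> (real \<times> real) set) \<Rightarrow> 'r \<Rightarrow> 'r \<Rightarrow> 'r config set" where
  "obs_pair C i j = (if i = j then {} else {x. (x i, x j) \<in> C i j})"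

definition obs_all :: "('r \<Rightarrow> 'r \<Rightarrow> (real \<times> real) set) \<Rightarrow> 'r config set" where
  "obs_all C = (\<Union>i. \<Union>j. obs_pair C i j)"

definition obs_prio :: "('r \<Rightarrow> 'r \<Rightarrow> (real \<times> real) set) \<Rightarrow> 'r \<Rightarrow> 'r \<Rightarrow> 'r config set" where
  "obs_prio C i j = {y. \<exists>x \<in> obs_pair C i j. \<exists>a b. a \<ge> 0 \<and> b \<ge> 0 \<and>
        y = (\<lambda>k. x k - a * unit_vec i k + b * unit_vec j k)}"

definition obs_G :: "('r \<Rightarrow> 'r \<Rightarrow> (real \<times> real) set) \<Rightarrow> ('r \<times> 'r) set \<Rightarrow> 'r config set" where
  "obs_G C E = (\<Union>(i, j) \<in> E. obs_prio C i j)"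

definition free_G :: "('r \<Rightarrow> 'r \<Rightarrow> (real \<times> real) set) \<Rightarrow> ('r \<times> 'r) set \<Rightarrow> 'r config set" where
  "free_G C E = UNIV - obs_G C E"

text \<open>Dynamics of one robot on one slot with constant control u, starting from
  (x0,v0) with 0 <= v0 <= vb: the velocity follows v' = u until it hits 0 or vb,
  where it stays (this is the solution of v' = u * delta(u,v)); x' = v.\<close>
definition sat :: "real \<Rightarrow> real \<Rightarrow> real" where
  "sat vb v = max 0 (min vb v)"

definition slot_flow :: "real \<Rightarrow> real \<times> real \<Rightarrow> real \<Rightarrow> real \<Rightarrow> real \<times> real" where
  "slot_flow vb s0 u \<tau> =
     (fst s0 + integral {0..\<tau>} (\<lambda>\<sigma>. sat vb (snd s0 + u * \<sigma>)), sat vb (snd s0 + u * \<tau>))"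

fun state_at :: "('r \<Rightarrow> real) \<Rightarrow> 'r state \<Rightarrow> 'r control \<Rightarrow> nat \<Rightarrow> 'r state" where
  "state_at vb s u 0 = s"
| "state_at vb s u (Suc k) = (\<lambda>i. slot_flow (vb i) (state_at vb s u k i) (u k i) 1)"

definition Phi :: "('r \<Rightarrow> real) \<Rightarrow> real \<Rightarrow> 'r state \<Rightarrow> 'r control \<Rightarrow> 'r state" where
  "Phi vb t s u = (let k = nat \<lfloor>t\<rfloor> in
      (\<lambda>i. slot_flow (vb i) (state_at vb s u k i) (u k i) (t - real k)))"

definition pos :: "'r state \<Rightarrow> 'r config" where
  "pos s = (\<lambda>i. fst (s i))"

definition states :: "('r \<Rightarrow> real) \<Rightarrow> 'r state set" where
  "states vb = {s. \<forall>i. 0 \<le> snd (s i) \<and> snd (s i) \<le> vb i}"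

definition brake_ctrl :: "('r \<Rightarrow> real) \<Rightarrow> 'r control" where
  "brake_ctrl ulo = (\<lambda>k i. ulo i)"

definition worst_ctrl :: "('r \<Rightarrow> real) \<Rightarrow> ('r \<Rightarrow> real) \<Rightarrow> 'r \<Rightarrow> 'r control" where
  "worst_ctrl ulo uhi i = (\<lambda>k j. if j = i \<and> k = 0 then uhi j else ulo j)"

definition brake_safe ::
  "('r \<Rightarrow> 'r \<Rightarrow> (real \<times> real) set) \<Rightarrow> ('r \<times> 'r) set \<Rightarrow> ('r \<Rightarrow> real) \<Rightarrow> ('r \<Rightarrow> real) \<Rightarrow> 'r state set" where
  "brake_safe C E vb ulo =
     {s \<in> states vb. \<forall>t \<ge> 0. pos (Phi vb t s (brake_ctrl ulo)) \<in> free_G C E}"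

definition ctrl_law ::
  "('r \<Rightarrow> 'r \<Rightarrow> (real \<times> real) set) \<Rightarrow> ('r \<times> 'r) set \<Rightarrow> ('r \<Rightarrow> real) \<Rightarrow> ('r \<Rightarrow> real) \<Rightarrow> ('r \<Rightarrow> real)
     \<Rightarrow> 'r state \<Rightarrow> 'r \<Rightarrow> real" where
  "ctrl_law C E vb ulo uhi s i =
     (if \<exists>j. (j, i) \<in> E \<and> (\<exists>t \<ge> 0. pos (Phi vb t s (worst_ctrl ulo uhi i)) \<in> obs_prio C j i)
      then ulo i else uhi i)"

end

theory Submission
  imports Defs
begin

text \<open>Positions are monotone in the controls, and the priority obstacle of an edge (j, i) is
  closed under moving robot i forward and robot j backward. So if the state at a slot
  boundary is brake-safe and the control law applies some control for one slot before
  everyone brakes, a collision on the priority obstacle of (j, i) would already occur under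
  a more cautious reference control with the same trajectory for robot i: the pure braking
  control if i brakes, and the worst case with respect to i if i accelerates. The first
  contradicts brake-safety, the second the definition of the control law.\<close>

definition brake_after :: "('r \<Rightarrow> real) \<Rightarrow> ('r \<Rightarrow> real) \<Rightarrow> 'r control" where
  "brake_after w ulo = (\<lambda>k i. if k = 0 then w i else ulo i)"

lemma sat_mono: "v' \<le> v \<Longrightarrow> sat vb v' \<le> sat vb v"
  by (simp add: sat_def)

lemma slot_flow_zero: "0 \<le> snd s0 \<Longrightarrow> snd s0 \<le> vb \<Longrightarrow> slot_flow vb s0 u 0 = s0"
  unfolding slot_flow_def sat_def by (simp add: prod_eq_iff)

lemma slot_flow_speed_bounds: "0 \<le> vb \<Longrightarrow> 0 \<le> snd (slot_flow vb s0 u t) \<and> snd (slot_flow vb s0 u t) \<le> vb"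
  unfolding slot_flow_def sat_def by auto

lemma slot_flow_mono:
  assumes "b \<le> a" "0 \<le> \<tau>" "fst s' \<le> fst s" "snd s' \<le> snd s"
  shows "fst (slot_flow vb s' b \<tau>) \<le> fst (slot_flow vb s a \<tau>) \<and>
         snd (slot_flow vb s' b \<tau>) \<le> snd (slot_flow vb s a \<tau>)"
proof -
  have speed_le: "snd s' + b * \<sigma> \<le> snd s + a * \<sigma>" if "0 \<le> \<sigma>" for \<sigma>
    using assms that by (smt (verit) mult_right_mono)
  have cont: "continuous_on {0..\<tau>} (\<lambda>\<sigma>. sat vb (v + c * \<sigma>))" for v c
    unfolding sat_def by (intro continuous_intros)
  have "integral {0..\<tau>} (\<lambda>\<sigma>. sat vb (snd s' + b * \<sigma>)) \<le> integral {0..\<tau>} (\<lambda>\<sigma>. sat vb (snd s + a * \<sigma>))"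
    by (rule integral_le) (auto intro!: integrable_continuous_interval cont sat_mono speed_le)
  then show ?thesis
    using assms speed_le[of \<tau>] sat_mono unfolding slot_flow_def by auto
qed

lemma state_at_mono:
  assumes "\<And>k. u' k i \<le> u k i"
  shows "fst (state_at vb s u' k i) \<le> fst (state_at vb s u k i) \<and>
         snd (state_at vb s u' k i) \<le> snd (state_at vb s u k i)"
proof (induction k)
  case (Suc k)
  then show ?case using slot_flow_mono[OF assms[of k], of 1] by simp
qed simp

lemma pos_Phi_mono:
  assumes "\<And>k. u' k i \<le> u k i" "0 \<le> t"
  shows "pos (Phi vb t s u') i \<le> pos (Phi vb t s u) i"
proof -
  have "real (nat \<lfloor>t\<rfloor>) \<le> t" using assms(2) by linarith
  then show ?thesis
    unfolding Phi_def pos_def Let_def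
    using slot_flow_mono state_at_mono assms by (metis diff_ge_0_iff_ge)
qed

lemma pos_Phi_cong:
  assumes "\<And>k. u' k i = u k i" "0 \<le> t"
  shows "pos (Phi vb t s u') i = pos (Phi vb t s u) i"
proof -
  have "u' k i \<le> u k i" "u k i \<le> u' k i" for k using assms(1)[of k] by simp_all
  then show ?thesis
    using pos_Phi_mono[of u' i u t vb s] pos_Phi_mono[of u i u' t vb s] assms(2) by (simp add: order_antisym)
qed

lemma state_at_in_states:
  assumes "s \<in> states vb" "\<And>i. 0 \<le> vb i"
  shows "state_at vb s u k \<in> states vb"
  using assms slot_flow_speed_bounds by (cases k) (auto simp: states_def)

lemma Phi_of_nat:
  assumes "s \<in> states vb" "\<And>i. 0 \<le> vb i"
  shows "Phi vb (real k) s u = state_at vb s u k"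
  using state_at_in_states[OF assms, of u k]
  by (auto simp: Phi_def states_def slot_flow_zero)

lemma state_at_add: "state_at vb s u (m + k) = state_at vb (state_at vb s u k) (\<lambda>n. u (n + k)) m"
  by (induction m) auto

lemma Phi_add_nat:
  assumes "0 \<le> t"
  shows "Phi vb (t + real k) s u = Phi vb t (state_at vb s u k) (\<lambda>n. u (n + k))"
proof -
  have "nat \<lfloor>t + real k\<rfloor> = nat \<lfloor>t\<rfloor> + k" using assms by linarith
  then show ?thesis by (simp add: Phi_def Let_def state_at_add)
qed

lemma Phi_first_slot_cong:
  assumes "0 \<le> t" "t < 1" "u' 0 = u 0"
  shows "Phi vb t s u' = Phi vb t s u"
proof -
  have "nat \<lfloor>t\<rfloor> = 0" using assms by linarith
  then show ?thesis using assms(3) by (simp add: Phi_def)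
qed

lemma obs_prio_self: "obs_prio C i i = {}"
  unfolding obs_prio_def obs_pair_def by auto

lemma obs_prio_mono:
  assumes "y \<in> obs_prio C j i" "y i \<le> z i" "z j \<le> y j"
  shows "z \<in> obs_prio C j i"
proof -
  from assms(1) obtain x a b where x: "x \<in> obs_pair C j i" "a \<ge> 0" "b \<ge> 0"
    and y: "y = (\<lambda>k. x k - a * unit_vec j k + b * unit_vec i k)"
    unfolding obs_prio_def by blast
  have "j \<noteq> i" using x(1) unfolding obs_pair_def by (auto split: if_splits)
  \<comment> \<open>only the coordinates i and j of a point of the cylinder matter\<close>
  define x' where "x' = (\<lambda>k. if k = i then x i else if k = j then x j else z k)"
  have "x' \<in> obs_pair C j i" using x(1) \<open>j \<noteq> i\<close> unfolding obs_pair_def x'_def by auto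
  moreover have "a + (y j - z j) \<ge> 0" "b + (z i - y i) \<ge> 0" using assms x by auto
  moreover have "z = (\<lambda>k. x' k - (a + (y j - z j)) * unit_vec j k + (b + (z i - y i)) * unit_vec i k)"
    using \<open>j \<noteq> i\<close> by (auto simp: y x'_def unit_vec_def)
  ultimately show ?thesis unfolding obs_prio_def by blast
qed

lemma pos_Phi_in_obs_prio_transfer:
  assumes "pos (Phi vb t s u) \<in> obs_prio C j i" "0 \<le> t"
    and "\<And>k. w k i = u k i" "\<And>k. w k j \<le> u k j"
  shows "pos (Phi vb t s w) \<in> obs_prio C j i"
  using obs_prio_mono[OF assms(1)] pos_Phi_cong[of w i u, OF assms(3,2)]
    pos_Phi_mono[of w j u, OF assms(4,2)]
  by simp

lemma ctrl_law_ge: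
  assumes "ulo i \<le> uhi i"
  shows "ulo i \<le> ctrl_law C E vb ulo uhi s i"
  using assms unfolding ctrl_law_def by simp

lemma brake_after_ctrl_law_free:
  assumes s: "s \<in> brake_safe C E vb ulo" and ulo_le: "\<And>i. ulo i \<le> uhi i" and "0 \<le> t"
  shows "pos (Phi vb t s (brake_after (ctrl_law C E vb ulo uhi s) ulo)) \<in> free_G C E"
proof (rule ccontr)
  let ?v = "brake_after (ctrl_law C E vb ulo uhi s) ulo"
  assume "pos (Phi vb t s ?v) \<notin> free_G C E"
  then obtain j i where E: "(j, i) \<in> E" and hit: "pos (Phi vb t s ?v) \<in> obs_prio C j i"
    unfolding free_G_def obs_G_def by auto
  then have "j \<noteq> i" using obs_prio_self by fastforce
  have brake_le: "brake_ctrl ulo k l \<le> ?v k l" for k l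
    using ctrl_law_ge[of ulo l uhi, OF ulo_le] by (simp add: brake_ctrl_def brake_after_def)
  show False
  proof (cases "\<exists>j. (j, i) \<in> E \<and> (\<exists>t \<ge> 0. pos (Phi vb t s (worst_ctrl ulo uhi i)) \<in> obs_prio C j i)")
    case True
    then have "brake_ctrl ulo k i = ?v k i" for k
      by (simp add: brake_ctrl_def brake_after_def ctrl_law_def)
    then have "pos (Phi vb t s (brake_ctrl ulo)) \<in> obs_prio C j i"
      using pos_Phi_in_obs_prio_transfer[OF hit \<open>0 \<le> t\<close>] brake_le by blast
    then show False using s E \<open>0 \<le> t\<close> unfolding brake_safe_def free_G_def obs_G_def by blast
  next
    case False
    then have "worst_ctrl ulo uhi i k i = ?v k i" for k
      unfolding worst_ctrl_def brake_after_def ctrl_law_def by auto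
    moreover have "worst_ctrl ulo uhi i k j \<le> ?v k j" for k
      using brake_le[of k j] \<open>j \<noteq> i\<close> by (simp add: worst_ctrl_def brake_ctrl_def)
    ultimately have "pos (Phi vb t s (worst_ctrl ulo uhi i)) \<in> obs_prio C j i"
      using pos_Phi_in_obs_prio_transfer[OF hit \<open>0 \<le> t\<close>] by blast
    then show False using False E \<open>0 \<le> t\<close> by blast
  qed
qed

lemma brake_safe_state_at_closed_loop:
  assumes s: "s \<in> brake_safe C E vb ulo" and ulo_le: "\<And>i. ulo i \<le> uhi i"
    and vb: "\<And>i. 0 \<le> vb i"
    and u: "\<And>k. u k = ctrl_law C E vb ulo uhi (state_at vb s u k)"
  shows "state_at vb s u k \<in> brake_safe C E vb ulo"
proof (induction k)
  case 0
  then show ?case using s by simp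
next
  case (Suc k)
  let ?v = "brake_after (u k) ulo"
  have "Phi vb t (state_at vb s u (Suc k)) (brake_ctrl ulo) = Phi vb (t + 1) (state_at vb s u k) ?v"
    if "0 \<le> t" for t
    using Phi_add_nat[OF that, of vb 1 "state_at vb s u k" ?v]
    by (simp add: brake_after_def brake_ctrl_def)
  then have "pos (Phi vb t (state_at vb s u (Suc k)) (brake_ctrl ulo)) \<in> free_G C E" if "0 \<le> t" for t
    using brake_after_ctrl_law_free[OF Suc ulo_le, of "t + 1"] u[of k] that by simp
  moreover have "state_at vb s u (Suc k) \<in> states vb"
    using s vb state_at_in_states unfolding brake_safe_def by blast
  ultimately show ?case unfolding brake_safe_def by blast
qed

theorem theorem1:
  fixes C :: "'r::finite \<Rightarrow> 'r \<Rightarrow> (real \<times> real) set"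
    and E :: "('r \<times> 'r) set"
    and vb ulo uhi :: "'r \<Rightarrow> real"
  assumes C_open: "\<And>i j. i \<noteq> j \<Longrightarrow> open (C i j)"
    and C_bounded: "\<And>i j. i \<noteq> j \<Longrightarrow> bounded (C i j)"
    and C_convex: "\<And>i j. i \<noteq> j \<Longrightarrow> convex (C i j)"
    and C_sym: "\<And>i j. i \<noteq> j \<Longrightarrow> C j i = prod.swap ` C i j"
    and vb_nonneg: "\<And>i. 0 \<le> vb i"
    and ulo_neg: "\<And>i. ulo i < 0"
    and uhi_pos: "\<And>i. 0 < uhi i"
  shows "\<forall>s \<in> brake_safe C E vb ulo. \<forall>u :: 'r control.
           (\<forall>k. u k = ctrl_law C E vb ulo uhi (Phi vb (real k) s u)) \<longrightarrow>
           (\<forall>k :: nat. Phi vb (real k) s u \<in> brake_safe C E vb ulo) \<and>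
           (\<forall>t \<ge> 0. pos (Phi vb t s u) \<in> free_G C E)"
proof (intro ballI allI impI conjI)
  fix s u
  assume s: "s \<in> brake_safe C E vb ulo"
    and u: "\<forall>k. u k = ctrl_law C E vb ulo uhi (Phi vb (real k) s u)"
  have ulo_le: "ulo i \<le> uhi i" for i using ulo_neg[of i] uhi_pos[of i] by linarith
  have at_nat: "Phi vb (real k) s u = state_at vb s u k" for k
    using s vb_nonneg by (simp add: Phi_of_nat brake_safe_def)
  have closed_loop: "u k = ctrl_law C E vb ulo uhi (state_at vb s u k)" for k
    using u at_nat by simp
  note safe = brake_safe_state_at_closed_loop[OF s ulo_le vb_nonneg closed_loop]
  show "Phi vb (real k) s u \<in> brake_safe C E vb ulo" for k
    using safe at_nat by simp
  fix t :: real
  assume "0 \<le> t"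
  define k where "k = nat \<lfloor>t\<rfloor>"
  have \<tau>: "0 \<le> t - real k" "t - real k < 1" unfolding k_def using \<open>0 \<le> t\<close> by linarith+
  have "Phi vb t s u = Phi vb (t - real k) (state_at vb s u k) (\<lambda>n. u (n + k))"
    using Phi_add_nat[OF \<tau>(1), of vb k s u] by simp
  also have "\<dots> = Phi vb (t - real k) (state_at vb s u k) (brake_after (u k) ulo)"
    by (rule Phi_first_slot_cong[OF \<tau>]) (simp add: brake_after_def)
  finally show "pos (Phi vb t s u) \<in> free_G C E"
    using brake_after_ctrl_law_free[OF safe ulo_le \<tau>(1)] closed_loop[of k] by simp
qed

end
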